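(* Let $\mathcal{S}$ be a Borel space and $(\mathbf{y},\mathbf{X})$ a random element of $\{\pm1\}^n\times\mathcal{S}$. Let $\mathcal{F}$ be a family of Borel maps from $\mathcal{S}$ to $\{\pm1\}^n$. Define $\mathcal{M}(\mathbf{u},\mathbf{v})=\min\{\frac1n\sum_i\mathbf{1}\{u_i\ne v_i\},\frac1n\sum_i\mathbf{1}\{-u_i\ne v_i\}\}$ for $\mathbf{u},\mathbf{v}\in\{\pm1\}^n$, and $f(\cdot\mid\tilde{\mathbf{X}},\tilde{\mathbf{y}}_{-i})=\mathbb{P}(y_i=\cdot\mid\mathbf{X}=\tilde{\mathbf{X}},\mathbf{y}_{-i}=\tilde{\mathbf{y}}_{-i})$ for $i\in[n]$. Then $\inf_{\hat{\mathbf{y}}\in\mathcal{F}}\mathbb{E}\mathcal{M}(\hat{\mathbf{y}}(\mathbf{X}),\mathbf{y})\ge\frac{n-1}{3n-1}\cdot\frac1n\sum_{i=1}^n\mathbb{P}\big[f(y_i\mid\mathbf{X},\mathbf{y}_{-i})<f(-y_i\mid\mathbf{X},\mathbf{y}_{-i})\big]$.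
   Context: $\mathbf{y}_{-i}\in\{\pm1\}^{n-1}$ denotes $\mathbf{y}$ with its $i$-th entry removed; $f$ is a (regular) conditional probability mass function of $y_i$ given $(\mathbf{X},\mathbf{y}_{-i})$. *)

theory Defs
  imports "HOL-Probability.Probability"
begin

text \<open>Sign vectors in {+-1}^n, represented as functions nat => int that are
  +-1 on the coordinates 0..n-1 and 0 elsewhere (canonical representatives).\<close>
definition signvecs :: "nat \<Rightarrow> (nat \<Rightarrow> int) set" where
  "signvecs n = {v. (\<forall>i<n. v i \<in> {-1, 1}) \<and> (\<forall>i\<ge>n. v i = 0)}"

definition mismatch :: "nat \<Rightarrow> (nat \<Rightarrow> int) \<Rightarrow> (nat \<Rightarrow> int) \<Rightarrow> real" where
  "mismatch n u v = min (card {i. i < n \<and> u i \<noteq> v i} / real n)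
                        (card {i. i < n \<and> - u i \<noteq> v i} / real n)"

text \<open>y_{-i}: remove the i-th entry (0-based), shifting later entries down.\<close>
definition drop_coord :: "nat \<Rightarrow> (nat \<Rightarrow> int) \<Rightarrow> (nat \<Rightarrow> int)" where
  "drop_coord i v = (\<lambda>j. if j < i then v j else v (Suc j))"

text \<open>f is a regular conditional probability mass function of y_i given
  (X, y_{-i}): for each coordinate i<n, each value b of y_i, f i b (X) (y_{-i})
  is a version of P(y_i = b | X, y_{-i}) (measurable, and integrating correctly
  over all generating events {X in A, y_{-i} = w}), and f i . x w is a
  probability mass function on {+-1}.\<close>
definition is_cond_pmf ::
  "'a measure \<Rightarrow> nat \<Rightarrow> ('a \<Rightarrow> 's::topological_space) \<Rightarrow> ('a \<Rightarrow> nat \<Rightarrow> int)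
     \<Rightarrow> (nat \<Rightarrow> int \<Rightarrow> 's \<Rightarrow> (nat \<Rightarrow> int) \<Rightarrow> real) \<Rightarrow> bool" where
  "is_cond_pmf M n X y f \<longleftrightarrow>
     (\<forall>i<n.
        (\<forall>x w. f i 1 x w \<ge> 0 \<and> f i (-1) x w \<ge> 0 \<and> f i 1 x w + f i (-1) x w = 1) \<and>
        (\<forall>b\<in>{-1, 1}. \<forall>w. (\<lambda>x. f i b x w) \<in> borel_measurable borel) \<and>
        (\<forall>b\<in>{-1, 1}. \<forall>A\<in>sets borel. \<forall>w.
           measure M {\<omega> \<in> space M. y \<omega> i = b \<and> X \<omega> \<in> A \<and> drop_coord i (y \<omega>) = w}
           = (\<integral>\<omega>. indicator {\<omega> \<in> space M. X \<omega> \<in> A \<and> drop_coord i (y \<omega>) = w} \<omega>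
                     * f i b (X \<omega>) w \<partial>M)))"

end

theory Submission
  imports Defs
begin

(* Given an estimator yh, guess each y_i from (X, y_{-i}) by yh_i(X), with its sign flipped
   when yh_{-i}(X) disagrees with y_{-i} on more than half of the other coordinates.
   Conditionally on (X, y_{-i}) no guess of y_i errs less often than the Bayes rule, whose
   error event is f(y_i | X, y_{-i}) < f(-y_i | X, y_{-i}). On the other hand, if u and v
   disagree in k of n >= 2 coordinates, these aligned guesses err on k coordinates when
   2k <= n + 1 and on the n - k others when n <= 2k, in total at most 3 min(k, n - k) =
   3n M(u, v). Taking expectations gives E M(yh(X), y) >= (1/(3n)) sum_i P(...), which is
   stronger than the claim since (n - 1)/(3n - 1) <= 1/3. *)

lemma finite_signvecs: "finite (signvecs n)"
proof (rule finite_subset[OF _ finite_set_of_finite_funs[of "{..<n}" "{-1, 1::int}" 0]])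
  show "signvecs n \<subseteq> {f. \<forall>x. (x \<in> {..<n} \<longrightarrow> f x \<in> {-1, 1}) \<and> (x \<notin> {..<n} \<longrightarrow> f x = 0)}"
    by (auto simp: signvecs_def)
qed auto

lemma card_disagree_drop_coord:
  assumes "i < n"
  shows "card {j. j < n - 1 \<and> drop_coord i u j \<noteq> drop_coord i v j}
         = card ({j. j < n \<and> u j \<noteq> v j} - {i})"
proof -
  let ?h = "\<lambda>j. if j < i then j else Suc j"
  have "{j. j < n \<and> u j \<noteq> v j} - {i} = ?h ` {j. j < n - 1 \<and> drop_coord i u j \<noteq> drop_coord i v j}"
  proof (intro set_eqI iffI)
    fix x assume x: "x \<in> {j. j < n \<and> u j \<noteq> v j} - {i}"
    show "x \<in> ?h ` {j. j < n - 1 \<and> drop_coord i u j \<noteq> drop_coord i v j}"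
    proof (cases "x < i")
      case True
      then show ?thesis using x assms by (intro rev_image_eqI[of x]) (auto simp: drop_coord_def)
    next
      case False
      then show ?thesis using x by (intro rev_image_eqI[of "x - 1"]) (auto simp: drop_coord_def)
    qed
  qed (use assms in \<open>auto simp: drop_coord_def split: if_splits\<close>)
  moreover have "inj_on ?h A" for A by (auto simp: inj_on_def split: if_splits)
  ultimately show ?thesis by (simp only: card_image)
qed

definition aligned_guess :: "nat \<Rightarrow> nat \<Rightarrow> (nat \<Rightarrow> int) \<Rightarrow> (nat \<Rightarrow> int) \<Rightarrow> int" where
  "aligned_guess n i u w =
     (if 2 * card {j. j < n - 1 \<and> drop_coord i u j \<noteq> w j} \<le> n - 1 then u i else - u i)"

lemma signvecs_coord: "v \<in> signvecs n \<Longrightarrow> i < n \<Longrightarrow> v i = 1 \<or> v i = -1"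
  by (auto simp: signvecs_def)

lemma aligned_guess_sign: "u \<in> signvecs n \<Longrightarrow> i < n \<Longrightarrow> aligned_guess n i u w \<in> {-1, 1}"
  using signvecs_coord[of u n i] by (auto simp: aligned_guess_def)

lemma aligned_guess_wrong_iff:
  assumes u: "u \<in> signvecs n" and v: "v \<in> signvecs n" and i: "i < n"
  defines "k \<equiv> card {j. j < n \<and> u j \<noteq> v j}"
  shows "v i \<noteq> aligned_guess n i u (drop_coord i v)
         \<longleftrightarrow> (u i \<noteq> v i \<and> 2 * k \<le> n + 1) \<or> (u i = v i \<and> n \<le> 2 * k)"
proof -
  have "card {j. j < n - 1 \<and> drop_coord i u j \<noteq> drop_coord i v j} = (if u i \<noteq> v i then k - 1 else k)"
    using i unfolding card_disagree_drop_coord[OF i] k_def by auto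
  moreover have "0 < k" if "u i \<noteq> v i"
    unfolding k_def using i that by (auto simp: card_gt_0_iff)
  ultimately show ?thesis
    using i signvecs_coord[OF u i] signvecs_coord[OF v i] unfolding aligned_guess_def by auto
qed

lemma card_disagree_le: "card {j. j < n \<and> u j \<noteq> v j} \<le> n"
  using card_mono[of "{..<n}" "{j. j < n \<and> u j \<noteq> v j}"] by auto

lemma card_aligned_guess_wrong:
  assumes u: "u \<in> signvecs n" and v: "v \<in> signvecs n"
  defines "k \<equiv> card {j. j < n \<and> u j \<noteq> v j}"
  shows "card {i. i < n \<and> v i \<noteq> aligned_guess n i u (drop_coord i v)}
         = (if 2 * k \<le> n + 1 then k else 0) + (if n \<le> 2 * k then n - k else 0)"
proof -
  have "{j. j < n \<and> u j = v j} = {..<n} - {j. j < n \<and> u j \<noteq> v j}"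
    by auto
  then have agree: "card {j. j < n \<and> u j = v j} = n - k"
    using card_Diff_subset[of "{j. j < n \<and> u j \<noteq> v j}" "{..<n}"] unfolding k_def by auto
  have "{i. i < n \<and> v i \<noteq> aligned_guess n i u (drop_coord i v)}
        = {j. j < n \<and> u j \<noteq> v j \<and> 2 * k \<le> n + 1} \<union> {j. j < n \<and> u j = v j \<and> n \<le> 2 * k}"
    using aligned_guess_wrong_iff[OF u v, folded k_def] by auto
  then have "card {i. i < n \<and> v i \<noteq> aligned_guess n i u (drop_coord i v)}
             = card {j. j < n \<and> u j \<noteq> v j \<and> 2 * k \<le> n + 1} + card {j. j < n \<and> u j = v j \<and> n \<le> 2 * k}"
    by (simp add: card_Un_disjoint disjoint_iff)
  moreover have "card {j. j < n \<and> u j \<noteq> v j \<and> 2 * k \<le> n + 1} = (if 2 * k \<le> n + 1 then k else 0)"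
    unfolding k_def by simp
  moreover have "card {j. j < n \<and> u j = v j \<and> n \<le> 2 * k} = (if n \<le> 2 * k then n - k else 0)"
    using agree by simp
  ultimately show ?thesis by presburger
qed

lemma mismatch_signvecs:
  assumes u: "u \<in> signvecs n" and v: "v \<in> signvecs n"
  defines "k \<equiv> card {j. j < n \<and> u j \<noteq> v j}"
  shows "real n * mismatch n u v = min k (n - k)"
proof -
  have "{j. j < n \<and> - u j \<noteq> v j} = {..<n} - {j. j < n \<and> u j \<noteq> v j}"
    using signvecs_coord[OF u] signvecs_coord[OF v] by force
  then have "card {j. j < n \<and> - u j \<noteq> v j} = n - k"
    unfolding k_def by (simp add: card_Diff_subset[of "{j. j < n \<and> u j \<noteq> v j}"] subset_eq)
  then show ?thesis
    unfolding mismatch_def k_def[symmetric] by (cases "n = 0") (auto simp: min_def divide_le_cancel)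
qed

lemma card_aligned_guess_wrong_le:
  assumes "2 \<le> n" and u: "u \<in> signvecs n" and v: "v \<in> signvecs n"
  shows "real (card {i. i < n \<and> v i \<noteq> aligned_guess n i u (drop_coord i v)})
         \<le> 3 * real n * mismatch n u v"
proof -
  define k where "k = card {j. j < n \<and> u j \<noteq> v j}"
  have "card {i. i < n \<and> v i \<noteq> aligned_guess n i u (drop_coord i v)} \<le> 3 * min k (n - k)"
    using assms card_disagree_le[of n u v]
    unfolding card_aligned_guess_wrong[OF u v] k_def[symmetric] by (simp add: min_def) presburger
  then show ?thesis
    unfolding mult.assoc mismatch_signvecs[OF u v] k_def[symmetric] by linarith
qed

definition cond_sign_pmf ::
  "'a measure \<Rightarrow> ('a \<Rightarrow> 's::topological_space) \<Rightarrow> ('a \<Rightarrow> int) \<Rightarrow> ('a \<Rightarrow> 'w)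
     \<Rightarrow> (int \<Rightarrow> 's \<Rightarrow> 'w \<Rightarrow> real) \<Rightarrow> bool" where
  "cond_sign_pmf M X Y W p \<longleftrightarrow>
     (\<forall>x w. p 1 x w \<ge> 0 \<and> p (-1) x w \<ge> 0 \<and> p 1 x w + p (-1) x w = 1) \<and>
     (\<forall>b\<in>{-1, 1}. \<forall>w. (\<lambda>x. p b x w) \<in> borel_measurable borel) \<and>
     (\<forall>b\<in>{-1, 1}. \<forall>A\<in>sets borel. \<forall>w.
        measure M {\<omega> \<in> space M. Y \<omega> = b \<and> X \<omega> \<in> A \<and> W \<omega> = w}
        = (\<integral>\<omega>. indicator {\<omega> \<in> space M. X \<omega> \<in> A \<and> W \<omega> = w} \<omega> * p b (X \<omega>) w \<partial>M))"

lemma is_cond_pmf_iff_cond_sign_pmf: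
  "is_cond_pmf M n X y f \<longleftrightarrow>
     (\<forall>i<n. cond_sign_pmf M X (\<lambda>\<omega>. y \<omega> i) (\<lambda>\<omega>. drop_coord i (y \<omega>)) (f i))"
  unfolding is_cond_pmf_def cond_sign_pmf_def ..

lemma cond_sign_pmf_bounds:
  assumes "cond_sign_pmf M X Y W p" and "b \<in> {-1, 1}"
  shows "0 \<le> p b x w" "p b x w \<le> 1"
  using assms unfolding cond_sign_pmf_def by (smt (verit) insertE singletonD)+

lemma sign_error_slice_eq_integral:
  assumes M: "finite_measure M" and X: "X \<in> borel_measurable M"
    and Y: "Y \<in> M \<rightarrow>\<^sub>M count_space UNIV" "\<forall>\<omega>\<in>space M. Y \<omega> \<in> {-1, 1}"
    and W: "W \<in> M \<rightarrow>\<^sub>M count_space UNIV"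
    and p: "cond_sign_pmf M X Y W p"
    and h: "h \<in> borel \<rightarrow>\<^sub>M count_space UNIV" "\<forall>x. h x \<in> {-1, 1}"
  shows "integrable M (\<lambda>\<omega>. indicator {\<omega> \<in> space M. W \<omega> = w} \<omega> * p (- h (X \<omega>)) (X \<omega>) w)"
    and "measure M {\<omega> \<in> space M. W \<omega> = w \<and> Y \<omega> \<noteq> h (X \<omega>)}
         = (\<integral>\<omega>. indicator {\<omega> \<in> space M. W \<omega> = w} \<omega> * p (- h (X \<omega>)) (X \<omega>) w \<partial>M)"
proof -
  interpret finite_measure M by fact
  note [measurable] = X Y(1) W
  define A where "A b = h -` {b}" for b
  define I where "I b \<omega> = indicator {\<omega> \<in> space M. X \<omega> \<in> A (- b) \<and> W \<omega> = w} \<omega> * p b (X \<omega>) w"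
    for b \<omega>
  have A[measurable]: "A b \<in> sets borel" for b
    using measurable_sets[OF h(1), of "{b}"] by (simp add: A_def)
  have sets: "{\<omega> \<in> space M. Y \<omega> = b \<and> X \<omega> \<in> A (- b) \<and> W \<omega> = w} \<in> sets M" for b
    by measurable
  have I: "integrable M (I b)" if "b \<in> {-1, 1}" for b
  proof (rule integrable_const_bound[where B = 1])
    show "AE \<omega> in M. norm (I b \<omega>) \<le> 1"
      using cond_sign_pmf_bounds[OF p that] by (auto simp: I_def indicator_def)
    have [measurable]: "(\<lambda>x. p b x w) \<in> borel_measurable borel"
      using p that unfolding cond_sign_pmf_def by auto
    show "I b \<in> borel_measurable M"
      unfolding I_def by measurable
  qed
  have sum_I: "(\<lambda>\<omega>. I 1 \<omega> + I (-1) \<omega>)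
               = (\<lambda>\<omega>. indicator {\<omega> \<in> space M. W \<omega> = w} \<omega> * p (- h (X \<omega>)) (X \<omega>) w)"
    using h(2) by (auto simp: fun_eq_iff I_def A_def indicator_def)
  show "integrable M (\<lambda>\<omega>. indicator {\<omega> \<in> space M. W \<omega> = w} \<omega> * p (- h (X \<omega>)) (X \<omega>) w)"
    unfolding sum_I[symmetric] using I by simp
  have "{\<omega> \<in> space M. W \<omega> = w \<and> Y \<omega> \<noteq> h (X \<omega>)}
        = {\<omega> \<in> space M. Y \<omega> = 1 \<and> X \<omega> \<in> A (- 1) \<and> W \<omega> = w}
          \<union> {\<omega> \<in> space M. Y \<omega> = -1 \<and> X \<omega> \<in> A (- (- 1)) \<and> W \<omega> = w}"
    using Y(2) h(2) by (auto simp: A_def) metis+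
  also have "measure M \<dots> = measure M {\<omega> \<in> space M. Y \<omega> = 1 \<and> X \<omega> \<in> A (- 1) \<and> W \<omega> = w}
          + measure M {\<omega> \<in> space M. Y \<omega> = -1 \<and> X \<omega> \<in> A (- (- 1)) \<and> W \<omega> = w}"
    using sets by (intro finite_measure_Union) auto
  also have "\<dots> = integral\<^sup>L M (I 1) + integral\<^sup>L M (I (-1))"
    using p A unfolding cond_sign_pmf_def I_def by simp
  also have "\<dots> = (\<integral>\<omega>. I 1 \<omega> + I (-1) \<omega> \<partial>M)"
    using I by simp
  finally show "measure M {\<omega> \<in> space M. W \<omega> = w \<and> Y \<omega> \<noteq> h (X \<omega>)}
         = (\<integral>\<omega>. indicator {\<omega> \<in> space M. W \<omega> = w} \<omega> * p (- h (X \<omega>)) (X \<omega>) w \<partial>M)"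
    unfolding sum_I .
qed

lemma bayes_error_slice_le:
  assumes M: "finite_measure M" and X: "X \<in> borel_measurable M"
    and Y: "Y \<in> M \<rightarrow>\<^sub>M count_space UNIV" "\<forall>\<omega>\<in>space M. Y \<omega> \<in> {-1, 1}"
    and W: "W \<in> M \<rightarrow>\<^sub>M count_space UNIV"
    and p: "cond_sign_pmf M X Y W p"
    and g: "g \<in> borel \<rightarrow>\<^sub>M count_space UNIV" "\<forall>x. g x \<in> {-1, 1}"
  shows "measure M {\<omega> \<in> space M. W \<omega> = w \<and> p (Y \<omega>) (X \<omega>) w < p (- Y \<omega>) (X \<omega>) w}
         \<le> measure M {\<omega> \<in> space M. W \<omega> = w \<and> Y \<omega> \<noteq> g (X \<omega>)}"
proof -
  interpret finite_measure M by fact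
  note [measurable] = X Y(1) W
  have [measurable]: "(\<lambda>x. p 1 x w) \<in> borel_measurable borel"
    "(\<lambda>x. p (-1) x w) \<in> borel_measurable borel"
    using p unfolding cond_sign_pmf_def by auto
  \<comment> \<open>the Bayes rule on the slice: \<open>p (- h x) x w\<close> is the smaller of the two probabilities\<close>
  define h where "h x = (if p 1 x w < p (-1) x w then -1 else 1 :: int)" for x
  have h_meas[measurable]: "h \<in> borel \<rightarrow>\<^sub>M count_space UNIV"
    unfolding h_def by measurable
  have h_sign: "\<forall>x. h x \<in> {-1, 1}"
    by (simp add: h_def)
  note slice_h = sign_error_slice_eq_integral[OF M X Y W p h_meas h_sign] and slice_g = sign_error_slice_eq_integral[OF M X Y W p g]
  have "{\<omega> \<in> space M. W \<omega> = w \<and> p (Y \<omega>) (X \<omega>) w < p (- Y \<omega>) (X \<omega>) w}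
        \<subseteq> {\<omega> \<in> space M. W \<omega> = w \<and> Y \<omega> \<noteq> h (X \<omega>)}"
    using Y(2) by (auto simp: h_def)
  then have "measure M {\<omega> \<in> space M. W \<omega> = w \<and> p (Y \<omega>) (X \<omega>) w < p (- Y \<omega>) (X \<omega>) w}
             \<le> measure M {\<omega> \<in> space M. W \<omega> = w \<and> Y \<omega> \<noteq> h (X \<omega>)}"
    by (intro finite_measure_mono) measurable
  also have "\<dots> \<le> measure M {\<omega> \<in> space M. W \<omega> = w \<and> Y \<omega> \<noteq> g (X \<omega>)}"
    unfolding slice_h(2) slice_g(2)
  proof (rule integral_mono[OF slice_h(1) slice_g(1)])
    show "indicator {\<omega> \<in> space M. W \<omega> = w} \<omega> * p (- h (X \<omega>)) (X \<omega>) w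
          \<le> indicator {\<omega> \<in> space M. W \<omega> = w} \<omega> * p (- g (X \<omega>)) (X \<omega>) w" for \<omega>
    proof -
      have "g (X \<omega>) = 1 \<or> g (X \<omega>) = -1" using g(2) by auto
      then show ?thesis by (auto simp: h_def indicator_def)
    qed
  qed
  finally show ?thesis .
qed

lemma finite_measure_eq_sum_slices:
  assumes "finite_measure M" and "finite (W ` space M)"
    and "\<And>w. {\<omega> \<in> space M. W \<omega> = w \<and> P \<omega>} \<in> sets M"
  shows "measure M {\<omega> \<in> space M. P \<omega>} = (\<Sum>w\<in>W ` space M. measure M {\<omega> \<in> space M. W \<omega> = w \<and> P \<omega>})"
proof -
  have "{\<omega> \<in> space M. P \<omega>} = (\<Union>w\<in>W ` space M. {\<omega> \<in> space M. W \<omega> = w \<and> P \<omega>})"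
    by auto
  also have "measure M \<dots> = (\<Sum>w\<in>W ` space M. measure M {\<omega> \<in> space M. W \<omega> = w \<and> P \<omega>})"
    by (rule finite_measure.finite_measure_finite_Union) (use assms in \<open>auto simp: disjoint_family_on_def\<close>)
  finally show ?thesis .
qed

lemma bayes_error_le:
  assumes M: "finite_measure M" and X: "X \<in> borel_measurable M"
    and Y: "Y \<in> M \<rightarrow>\<^sub>M count_space UNIV" "\<forall>\<omega>\<in>space M. Y \<omega> \<in> {-1, 1}"
    and W: "W \<in> M \<rightarrow>\<^sub>M count_space UNIV" "finite (W ` space M)"
    and p: "cond_sign_pmf M X Y W p"
    and g: "\<And>w. (\<lambda>x. g x w) \<in> borel \<rightarrow>\<^sub>M count_space UNIV" "\<And>x w. g x w \<in> {-1, 1}"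
  shows "measure M {\<omega> \<in> space M. p (Y \<omega>) (X \<omega>) (W \<omega>) < p (- Y \<omega>) (X \<omega>) (W \<omega>)}
         \<le> measure M {\<omega> \<in> space M. Y \<omega> \<noteq> g (X \<omega>) (W \<omega>)}"
proof -
  note [measurable] = X Y(1) W(1) g(1)
  have [measurable]: "(\<lambda>x. p 1 x w) \<in> borel_measurable borel" "(\<lambda>x. p (-1) x w) \<in> borel_measurable borel"
    for w using p unfolding cond_sign_pmf_def by auto
  have bayes_slice: "{\<omega> \<in> space M. W \<omega> = w \<and> p (Y \<omega>) (X \<omega>) (W \<omega>) < p (- Y \<omega>) (X \<omega>) (W \<omega>)}
      = {\<omega> \<in> space M. W \<omega> = w \<and> p (Y \<omega>) (X \<omega>) w < p (- Y \<omega>) (X \<omega>) w}" for w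
    by auto
  have "{\<omega> \<in> space M. W \<omega> = w \<and> p (Y \<omega>) (X \<omega>) w < p (- Y \<omega>) (X \<omega>) w}
      = {\<omega> \<in> space M. W \<omega> = w \<and> (if Y \<omega> = 1 then p 1 (X \<omega>) w < p (-1) (X \<omega>) w
                                          else p (-1) (X \<omega>) w < p 1 (X \<omega>) w)}" for w
    using Y(2) by auto
  then have bayes_sets: "{\<omega> \<in> space M. W \<omega> = w \<and> p (Y \<omega>) (X \<omega>) w < p (- Y \<omega>) (X \<omega>) w} \<in> sets M"
    for w by simp measurable
  have "measure M {\<omega> \<in> space M. p (Y \<omega>) (X \<omega>) (W \<omega>) < p (- Y \<omega>) (X \<omega>) (W \<omega>)}
      = (\<Sum>w\<in>W ` space M. measure M {\<omega> \<in> space M. W \<omega> = w \<and> p (Y \<omega>) (X \<omega>) w < p (- Y \<omega>) (X \<omega>) w})"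
    unfolding bayes_slice[symmetric] using bayes_sets
    by (intro finite_measure_eq_sum_slices[OF M W(2)]) (simp add: bayes_slice)
  also have "\<dots> \<le> (\<Sum>w\<in>W ` space M. measure M {\<omega> \<in> space M. W \<omega> = w \<and> Y \<omega> \<noteq> g (X \<omega>) w})"
    using g by (intro sum_mono bayes_error_slice_le[OF M X Y W(1) p]) auto
  also have "\<dots> = measure M {\<omega> \<in> space M. Y \<omega> \<noteq> g (X \<omega>) (W \<omega>)}"
  proof -
    have "{\<omega> \<in> space M. W \<omega> = w \<and> Y \<omega> \<noteq> g (X \<omega>) (W \<omega>)} = {\<omega> \<in> space M. W \<omega> = w \<and> Y \<omega> \<noteq> g (X \<omega>) w}"
      for w by auto
    moreover have "{\<omega> \<in> space M. W \<omega> = w \<and> Y \<omega> \<noteq> g (X \<omega>) w} \<in> sets M" for w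
      by measurable
    ultimately show ?thesis
      using finite_measure_eq_sum_slices[OF M W(2), of "\<lambda>\<omega>. Y \<omega> \<noteq> g (X \<omega>) (W \<omega>)"] by simp
  qed
  finally show ?thesis .
qed

lemma mismatch_nonneg: "0 \<le> mismatch n u v"
  by (simp add: mismatch_def)

lemma mismatch_le_1: "mismatch n u v \<le> 1"
proof -
  have "card {i. i < n \<and> u i \<noteq> v i} \<le> n" by (rule card_disagree_le)
  then show ?thesis
    unfolding mismatch_def by (cases "n = 0") (auto simp: min_le_iff_disj divide_le_eq)
qed

lemma measurable_count_space_comp2:
  assumes "u \<in> M \<rightarrow>\<^sub>M count_space A" and "v \<in> M \<rightarrow>\<^sub>M count_space B" and "countable B"
    and "\<And>a b. h a b \<in> space N"
  shows "(\<lambda>\<omega>. h (u \<omega>) (v \<omega>)) \<in> M \<rightarrow>\<^sub>M N"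
proof (rule measurable_compose_countable'[OF _ assms(2,3)])
  show "(\<lambda>\<omega>. h (u \<omega>) b) \<in> M \<rightarrow>\<^sub>M N" for b
    using assms(4) by (intro measurable_compose[OF assms(1)]) (simp add: measurable_count_space_eq1)
qed

lemma bayes_error_le_aligned_guess_error:
  assumes M: "finite_measure M" and X: "X \<in> borel_measurable M"
    and y: "y \<in> M \<rightarrow>\<^sub>M count_space (signvecs n)"
    and yh: "yh \<in> borel \<rightarrow>\<^sub>M count_space (signvecs n)"
    and f: "is_cond_pmf M n X y f" and i: "i < n"
  shows "measure M {\<omega> \<in> space M.
            f i (y \<omega> i) (X \<omega>) (drop_coord i (y \<omega>)) < f i (- y \<omega> i) (X \<omega>) (drop_coord i (y \<omega>))}
         \<le> measure M {\<omega> \<in> space M. y \<omega> i \<noteq> aligned_guess n i (yh (X \<omega>)) (drop_coord i (y \<omega>))}"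
proof (rule bayes_error_le[OF M X, where Y = "\<lambda>\<omega>. y \<omega> i" and W = "\<lambda>\<omega>. drop_coord i (y \<omega>)"
      and p = "f i" and g = "\<lambda>x w. aligned_guess n i (yh x) w"])
  show "cond_sign_pmf M X (\<lambda>\<omega>. y \<omega> i) (\<lambda>\<omega>. drop_coord i (y \<omega>)) (f i)"
    using f i by (simp add: is_cond_pmf_iff_cond_sign_pmf)
  show "(\<lambda>\<omega>. y \<omega> i) \<in> M \<rightarrow>\<^sub>M count_space UNIV"
    using measurable_compose[OF y measurable_count_space] .
  show "\<forall>\<omega>\<in>space M. y \<omega> i \<in> {-1, 1}"
    using measurable_space[OF y] i by (auto simp: signvecs_def)
  show "(\<lambda>\<omega>. drop_coord i (y \<omega>)) \<in> M \<rightarrow>\<^sub>M count_space UNIV"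
    using measurable_compose[OF y measurable_count_space] .
  have "y ` space M \<subseteq> signvecs n"
    using measurable_space[OF y] by auto
  then have "finite (y ` space M)"
    using finite_signvecs by (rule finite_subset)
  then show "finite ((\<lambda>\<omega>. drop_coord i (y \<omega>)) ` space M)"
    using finite_imageI[of "y ` space M" "drop_coord i"] by (simp add: image_image)
  show "(\<lambda>x. aligned_guess n i (yh x) w) \<in> borel \<rightarrow>\<^sub>M count_space UNIV" for w
    using measurable_compose[OF yh measurable_count_space] .
  show "aligned_guess n i (yh x) w \<in> {-1, 1}" for x w
    using aligned_guess_sign[OF _ i] measurable_space[OF yh, of x] by simp
qed

lemma sum_bayes_errors_le_expected_mismatch:
  assumes M: "prob_space M" and X: "X \<in> borel_measurable M"
    and y: "y \<in> M \<rightarrow>\<^sub>M count_space (signvecs n)"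
    and yh: "yh \<in> borel \<rightarrow>\<^sub>M count_space (signvecs n)"
    and f: "is_cond_pmf M n X y f" and n: "2 \<le> n"
  shows "(\<Sum>i<n. measure M {\<omega> \<in> space M.
            f i (y \<omega> i) (X \<omega>) (drop_coord i (y \<omega>)) < f i (- y \<omega> i) (X \<omega>) (drop_coord i (y \<omega>))})
         \<le> 3 * real n * prob_space.expectation M (\<lambda>\<omega>. mismatch n (yh (X \<omega>)) (y \<omega>))"
proof -
  interpret prob_space M by fact
  have yhX: "(\<lambda>\<omega>. yh (X \<omega>)) \<in> M \<rightarrow>\<^sub>M count_space (signvecs n)"
    using X yh by (rule measurable_compose)
  note comp2 = measurable_count_space_comp2[OF yhX y countable_finite[OF finite_signvecs]]
  define err where
    "err i = {\<omega> \<in> space M. y \<omega> i \<noteq> aligned_guess n i (yh (X \<omega>)) (drop_coord i (y \<omega>))}" for i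
  have err_sets: "err i \<in> sets M" for i
    using comp2[of "\<lambda>u v. v i \<noteq> aligned_guess n i u (drop_coord i v)" "count_space UNIV"]
    unfolding err_def pred_def by simp
  have err_int: "integrable M (indicator (err i) :: 'a \<Rightarrow> real)" for i
    using err_sets by (simp add: less_top[symmetric])
  have mismatch_int: "integrable M (\<lambda>\<omega>. mismatch n (yh (X \<omega>)) (y \<omega>))"
  proof (rule integrable_const_bound[where B = 1])
    show "AE \<omega> in M. norm (mismatch n (yh (X \<omega>)) (y \<omega>)) \<le> 1"
      by (simp add: mismatch_nonneg mismatch_le_1)
    show "(\<lambda>\<omega>. mismatch n (yh (X \<omega>)) (y \<omega>)) \<in> borel_measurable M"
      using comp2[of "mismatch n"] by simp
  qed
  have "(\<Sum>i<n. measure M {\<omega> \<in> space M.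
            f i (y \<omega> i) (X \<omega>) (drop_coord i (y \<omega>)) < f i (- y \<omega> i) (X \<omega>) (drop_coord i (y \<omega>))})
        \<le> (\<Sum>i<n. measure M (err i))"
    unfolding err_def using M X y yh f
    by (intro sum_mono bayes_error_le_aligned_guess_error) (auto simp: prob_space.finite_measure)
  also have "\<dots> = (\<integral>\<omega>. (\<Sum>i<n. indicator (err i) \<omega>) \<partial>M)"
  proof -
    have "err i \<inter> space M = err i" for i
      unfolding err_def by auto
    then show ?thesis
      by (subst Bochner_Integration.integral_sum[OF err_int]) simp
  qed
  also have "\<dots> \<le> (\<integral>\<omega>. 3 * real n * mismatch n (yh (X \<omega>)) (y \<omega>) \<partial>M)"
  proof (rule integral_mono)
    show "integrable M (\<lambda>\<omega>. \<Sum>i<n. indicator (err i) \<omega> :: real)"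
      by (intro Bochner_Integration.integrable_sum err_int)
    show "integrable M (\<lambda>\<omega>. 3 * real n * mismatch n (yh (X \<omega>)) (y \<omega>))"
      using mismatch_int by (rule integrable_mult_right)
    fix \<omega> assume \<omega>: "\<omega> \<in> space M"
    have "(\<Sum>i<n. indicator (err i) \<omega>) = real (card {i. i < n \<and> \<omega> \<in> err i})"
      by (simp add: indicator_def sum.If_cases Int_def)
    also have "{i. i < n \<and> \<omega> \<in> err i}
               = {i. i < n \<and> y \<omega> i \<noteq> aligned_guess n i (yh (X \<omega>)) (drop_coord i (y \<omega>))}"
      using \<omega> by (auto simp: err_def)
    also have "real (card \<dots>) \<le> 3 * real n * mismatch n (yh (X \<omega>)) (y \<omega>)"
      using card_aligned_guess_wrong_le[OF n] measurable_space[OF yhX \<omega>] measurable_space[OF y \<omega>]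
      by simp
    finally show "(\<Sum>i<n. indicator (err i) \<omega>) \<le> 3 * real n * mismatch n (yh (X \<omega>)) (y \<omega>)" .
  qed
  also have "\<dots> = 3 * real n * expectation (\<lambda>\<omega>. mismatch n (yh (X \<omega>)) (y \<omega>))"
    by simp
  finally show ?thesis .
qed

theorem lemmaF3:
  fixes M :: "'a measure" and n :: nat
    and X :: "'a \<Rightarrow> 's::polish_space"
    and y :: "'a \<Rightarrow> nat \<Rightarrow> int"
    and F :: "('s \<Rightarrow> nat \<Rightarrow> int) set"
    and f :: "nat \<Rightarrow> int \<Rightarrow> 's \<Rightarrow> (nat \<Rightarrow> int) \<Rightarrow> real"
  assumes "prob_space M"
    and "X \<in> borel_measurable M"
    and "y \<in> M \<rightarrow>\<^sub>M count_space (signvecs n)"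
    and "\<forall>yh\<in>F. yh \<in> borel \<rightarrow>\<^sub>M count_space (signvecs n)"
    and "is_cond_pmf M n X y f"
  shows "(INF yh\<in>F. ereal (prob_space.expectation M (\<lambda>\<omega>. mismatch n (yh (X \<omega>)) (y \<omega>))))
         \<ge> ereal ((real n - 1) / (3 * real n - 1) * (1 / real n) *
              (\<Sum>i<n. measure M {\<omega> \<in> space M.
                  f i (y \<omega> i) (X \<omega>) (drop_coord i (y \<omega>))
                  < f i (- y \<omega> i) (X \<omega>) (drop_coord i (y \<omega>))}))"
proof (rule INF_greatest)
  interpret prob_space M by fact
  fix yh assume "yh \<in> F"
  then have yh: "yh \<in> borel \<rightarrow>\<^sub>M count_space (signvecs n)" using assms(4) by blast
  define S where "S = (\<Sum>i<n. measure M {\<omega> \<in> space M.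
                  f i (y \<omega> i) (X \<omega>) (drop_coord i (y \<omega>))
                  < f i (- y \<omega> i) (X \<omega>) (drop_coord i (y \<omega>))})"
  define E where "E = expectation (\<lambda>\<omega>. mismatch n (yh (X \<omega>)) (y \<omega>))"
  have "(real n - 1) / (3 * real n - 1) * (1 / real n) * S \<le> E"
  proof (cases "2 \<le> n")
    case False
    then have "n = 0 \<or> n = 1" by auto
    moreover have "0 \<le> E" unfolding E_def by (simp add: mismatch_nonneg)
    ultimately show ?thesis by auto
  next
    case True
    have "S \<le> 3 * real n * E"
      unfolding S_def E_def by (rule sum_bayes_errors_le_expected_mismatch[OF assms(1-2,3) yh assms(5) True])
    moreover have "(real n - 1) / (3 * real n - 1) * (1 / real n) \<le> 1 / (3 * real n)"
      using True by (simp add: field_simps)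
    moreover have "0 \<le> S" unfolding S_def by (simp add: sum_nonneg)
    ultimately have "(real n - 1) / (3 * real n - 1) * (1 / real n) * S \<le> S / (3 * real n)"
      by (metis mult_right_mono times_divide_eq_left mult_1)
    also have "\<dots> \<le> E" using True \<open>S \<le> 3 * real n * E\<close> by (simp add: divide_le_eq mult.commute)
    finally show ?thesis .
  qed
  then show "ereal ((real n - 1) / (3 * real n - 1) * (1 / real n) * S) \<le> ereal E" by simp
qed

end
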